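(* Let $V$ be a real-valued function on the set of all games (as defined in the context) that satisfies Constancy, Dominance, Additivity, Continuity and Indifference. Let $G=(\mathbf{c},\mathbf{r})$ be a game with $n$ outcomes such that $c_i=c_1$ for all $i=1,\dots,n$. Then \[ V(G)=\frac1n\sum_{i=1}^n r_i. \]
   Context: A game with $n$ outcomes ($n\ge1$) is a pair $G=(\mathbf{c},\mathbf{r})$ with $\mathbf{c}\in\mathbb{C}^n$ and $\mathbf{r}\in\mathbb{R}^n$; $V$ assigns a real number to each game. Axioms: Constancy: if $r_i=r_1$ for all $i$, then $V(\mathbf{c},\mathbf{r})=r_1$. Dominance: if $\mathbf{r}\ge\mathbf{r}'$ componentwise, then $V(\mathbf{c},\mathbf{r})\ge V(\mathbf{c},\mathbf{r}')$. Additivity: $V(\mathbf{c},\mathbf{r}+\mathbf{r}')=V(\mathbf{c},\mathbf{r})+V(\mathbf{c},\mathbf{r}')$. Continuity: if games $G_k$ with $n$ outcomes converge to a game $G$ with $n$ outcomes in the metric induced by $\|(\mathbf{c},\mathbf{r})\|:=\|\mathbf{c}\|_3+\|\mathbf{r}\|_1$, then $V(G)=\lim_k V(G_k)$. Indifference: for every permutation $\sigma$ of $\{1,\dots,n\}$, $V(\sigma(\mathbf{c}),\sigma(\mathbf{r}))=V(\mathbf{c},\mathbf{r})$, where $\sigma$ acts on vectors by permuting their components, $(\sigma(\mathbf{v}))_i=v_{\sigma(i)}$. *)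

theory Defs
  imports "HOL-Analysis.Analysis" "HOL-Combinatorics.Permutations"
begin

text \<open>A game with n outcomes (n \<ge> 1) is represented by a pair of lists (c, r) of
  equal length n; outcomes are indexed 0..n-1.  V is a real-valued function on such
  pairs; its values on ill-formed pairs are irrelevant.\<close>

definition is_game :: "complex list \<Rightarrow> real list \<Rightarrow> bool" where
  "is_game c r \<longleftrightarrow> length c = length r \<and> length r \<ge> 1"

definition norm3 :: "complex list \<Rightarrow> real" where
  "norm3 c = (\<Sum>i<length c. cmod (c ! i) ^ 3) powr (1/3)"

definition norm1 :: "real list \<Rightarrow> real" where
  "norm1 r = (\<Sum>i<length r. \<bar>r ! i\<bar>)"

definition game_dist :: "complex list \<Rightarrow> real list \<Rightarrow> complex list \<Rightarrow> real list \<Rightarrow> real" where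
  "game_dist c r c' r' = norm3 (map2 (-) c c') + norm1 (map2 (-) r r')"

definition constancy :: "(complex list \<Rightarrow> real list \<Rightarrow> real) \<Rightarrow> bool" where
  "constancy V \<longleftrightarrow> (\<forall>c r. is_game c r \<and> (\<forall>i<length r. r ! i = r ! 0) \<longrightarrow> V c r = r ! 0)"

definition dominance :: "(complex list \<Rightarrow> real list \<Rightarrow> real) \<Rightarrow> bool" where
  "dominance V \<longleftrightarrow> (\<forall>c r r'. is_game c r \<and> is_game c r' \<and> (\<forall>i<length r. r ! i \<ge> r' ! i)
      \<longrightarrow> V c r \<ge> V c r')"

definition additivity :: "(complex list \<Rightarrow> real list \<Rightarrow> real) \<Rightarrow> bool" where
  "additivity V \<longleftrightarrow> (\<forall>c r r'. is_game c r \<and> is_game c r'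
      \<longrightarrow> V c (map2 (+) r r') = V c r + V c r')"

definition continuity :: "(complex list \<Rightarrow> real list \<Rightarrow> real) \<Rightarrow> bool" where
  "continuity V \<longleftrightarrow> (\<forall>C R c r. is_game c r \<and> (\<forall>k. is_game (C k) (R k) \<and> length (R k) = length r)
      \<and> (\<lambda>k. game_dist (C k) (R k) c r) \<longlonglongrightarrow> 0
      \<longrightarrow> (\<lambda>k. V (C k) (R k)) \<longlonglongrightarrow> V c r)"

definition indifference :: "(complex list \<Rightarrow> real list \<Rightarrow> real) \<Rightarrow> bool" where
  "indifference V \<longleftrightarrow> (\<forall>c r \<sigma>. is_game c r \<and> \<sigma> permutes {..<length r}
      \<longrightarrow> V (permute_list \<sigma> c) (permute_list \<sigma> r) = V c r)"

end

theory Submission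
  imports Defs
begin

text \<open>Averaging over the n cyclic rotations of r: when all c_i coincide, Indifference
  gives every rotation the value V(c, r), so by Additivity the componentwise sum of the
  rotations has value n V(c, r). That sum is the constant vector with every entry equal
  to the sum of the r_i, whose value Constancy fixes.\<close>

lemma mset_rotate [simp]: "mset (rotate n xs) = mset xs"
  by (metis append_take_drop_id mset_append rotate_drop_take union_commute)

lemma sum_rotate_nth:
  assumes "i < length xs"
  shows "(\<Sum>k<length xs. rotate k xs ! i) = sum_list xs"
proof -
  have "rotate k xs ! i = rotate i xs ! k" if "k < length xs" for k
    using assms that by (simp add: nth_rotate add.commute)
  then have "(\<Sum>k<length xs. rotate k xs ! i) = (\<Sum>k<length (rotate i xs). rotate i xs ! k)"
    by simp
  also have "\<dots> = sum_list (rotate i xs)"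
    by (simp add: sum_list_sum_nth atLeast0LessThan)
  also have "\<dots> = sum_list xs"
    by (metis mset_rotate sum_mset_sum_list)
  finally show ?thesis .
qed

lemma permute_list_constant:
  assumes "\<sigma> permutes {..<length xs}" and "\<forall>i<length xs. xs ! i = xs ! 0"
  shows "permute_list \<sigma> xs = xs"
proof (rule nth_equalityI)
  fix i assume "i < length (permute_list \<sigma> xs)"
  then have "\<sigma> i < length xs"
    using assms(1) permutes_in_image by fastforce
  then show "permute_list \<sigma> xs ! i = xs ! i"
    using assms \<open>i < length (permute_list \<sigma> xs)\<close> by (simp add: permute_list_nth)
qed simp

lemma indifference_mset_eq:
  assumes "indifference V" and "is_game c r"
    and "\<forall>i<length c. c ! i = c ! 0" and "mset r' = mset r"
  shows "V c r' = V c r"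
proof -
  obtain \<sigma> where \<sigma>: "\<sigma> permutes {..<length r}" and r': "permute_list \<sigma> r = r'"
    using mset_eq_permutation[OF assms(4)] .
  have "permute_list \<sigma> c = c"
    using \<sigma> assms(2,3) by (intro permute_list_constant) (auto simp: is_game_def)
  then show ?thesis
    using assms(1,2) \<sigma> r' unfolding indifference_def by metis
qed

lemma additivity_zero:
  assumes "additivity V" and "is_game c (replicate n 0)"
  shows "V c (replicate n 0) = 0"
proof -
  have "map2 (+) (replicate n 0) (replicate n 0) = replicate n (0::real)"
    by (simp add: zip_replicate)
  then show ?thesis
    using assms unfolding additivity_def by (metis add_cancel_left_left)
qed

lemma additivity_sum:
  assumes "additivity V" and "finite K" and "is_game c (replicate n 0)"
    and "\<forall>k\<in>K. length (R k) = n"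
  shows "V c (map (\<lambda>i. \<Sum>k\<in>K. R k ! i) [0..<n]) = (\<Sum>k\<in>K. V c (R k))"
  using assms(2,4)
proof (induction K rule: finite_induct)
  case empty
  then show ?case
    using additivity_zero[OF assms(1,3)] by (simp add: map_replicate_const)
next
  case (insert k K)
  have "map (\<lambda>i. \<Sum>k\<in>insert k K. R k ! i) [0..<n]
        = map2 (+) (R k) (map (\<lambda>i. \<Sum>k\<in>K. R k ! i) [0..<n])"
    using insert by (intro nth_equalityI) auto
  moreover have "is_game c (R k)" "is_game c (map (\<lambda>i. \<Sum>k\<in>K. R k ! i) [0..<n])"
    using assms(3) insert.prems by (auto simp: is_game_def)
  ultimately show ?case
    using assms(1) insert unfolding additivity_def by simp
qed

theorem lemma2:
  fixes V :: "complex list \<Rightarrow> real list \<Rightarrow> real"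
    and c :: "complex list" and r :: "real list"
  assumes "constancy V" and "dominance V" and "additivity V"
    and "continuity V" and "indifference V"
    and "is_game c r"
    and "\<forall>i<length c. c ! i = c ! 0"
  shows "V c r = (\<Sum>i<length r. r ! i) / real (length r)"
proof -
  define n where "n = length r"
  have "n > 0"
    using assms(6) by (auto simp: is_game_def n_def)
  have game_n: "is_game c (replicate n x)" for x :: real
    using assms(6) by (simp add: is_game_def n_def)
  have "sum_list r = V c (replicate n (sum_list r))"
    using assms(1) game_n \<open>n > 0\<close> unfolding constancy_def by simp
  also have "replicate n (sum_list r) = map (\<lambda>i. \<Sum>k<n. rotate k r ! i) [0..<n]"
    by (rule nth_equalityI) (simp_all add: sum_rotate_nth n_def)
  also have "V c \<dots> = (\<Sum>k<n. V c (rotate k r))"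
    using assms(3) game_n by (intro additivity_sum) (auto simp: n_def)
  also have "\<dots> = real n * V c r"
  proof -
    have "V c (rotate k r) = V c r" for k
      by (rule indifference_mset_eq[OF assms(5-7)]) simp
    then show ?thesis
      by simp
  qed
  finally have "sum_list r = real n * V c r" .
  then show ?thesis
    using \<open>n > 0\<close> by (simp add: n_def sum_list_sum_nth atLeast0LessThan)
qed

end
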